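(* Let $\mathcal{A}$ be an abelian category. (1) Let $M$ be a weak duo object of $\mathcal{A}$ having SSIP, and let $(N_i)_{i\in I}$ be a family of objects of $\mathcal{A}$ having a product. Then $\prod_{i\in I} N_i$ is strongly $M$-Rickart if and only if $N_i$ is strongly $M$-Rickart for every $i\in I$. (2) Let $(M_i)_{i\in I}$ be a family of objects of $\mathcal{A}$ having a coproduct, and let $N$ be a weak duo object of $\mathcal{A}$ having SSSP. Then $N$ is dual strongly $\bigoplus_{i\in I} M_i$-Rickart if and only if $N$ is dual strongly $M_i$-Rickart for every $i\in I$.
   Context: An object $M$ has the strong summand intersection property (SSIP) if the intersection of any family of direct summands of $M$ is a direct summand of $M$; it has the strong summand sum property (SSSP) if the sum of any family of direct summands of $M$ is a direct summand of $M$. A morphism $f:X\to Y$ is a section if $f'f=1_X$ for some $f'$, a retraction if $ff'=1_Y$ for some $f'$. A monomorphism $k:K\to X$ is fully invariant if for every $h:X\to X$ there is $\alpha:K\to K$ with $hk=k\alpha$; an epimorphism $c:X\to C$ is fully coinvariant if for every $h:X\to X$ there is $\gamma:C\to C$ with $ch=\gamma c$. An object is weak duo if every section into it is fully invariant (equivalently every retraction from it is fully coinvariant). $N$ is strongly $M$-Rickart if the kernel of every morphism $f:M\to N$ is a fully invariant section; $N$ is dual strongly $M$-Rickart if the cokernel of every morphism $f:M\to N$ is a fully coinvariant retraction (equivalently its image is a fully invariant section of $N$). *)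

theory Defs
  imports Main
begin

record ('o, 'm) category =
  Obj :: "'o set"
  Arr :: "'m set"
  Dom :: "'m \<Rightarrow> 'o"
  Cod :: "'m \<Rightarrow> 'o"
  cmp :: "'m \<Rightarrow> 'm \<Rightarrow> 'm"   (* cmp C g f = g \<circ> f *)
  idm :: "'o \<Rightarrow> 'm"

definition hom :: "('o,'m) category \<Rightarrow> 'o \<Rightarrow> 'o \<Rightarrow> 'm set" where
  "hom C X Y = {f \<in> Arr C. Dom C f = X \<and> Cod C f = Y}"

definition is_category :: "('o,'m) category \<Rightarrow> bool" where
  "is_category C \<longleftrightarrow>
     (\<forall>f \<in> Arr C. Dom C f \<in> Obj C \<and> Cod C f \<in> Obj C) \<and>
     (\<forall>X \<in> Obj C. idm C X \<in> hom C X X) \<and>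
     (\<forall>X Y Z f g. f \<in> hom C X Y \<longrightarrow> g \<in> hom C Y Z \<longrightarrow> cmp C g f \<in> hom C X Z) \<and>
     (\<forall>X Y f. f \<in> hom C X Y \<longrightarrow> cmp C f (idm C X) = f \<and> cmp C (idm C Y) f = f) \<and>
     (\<forall>W X Y Z f g h. f \<in> hom C W X \<longrightarrow> g \<in> hom C X Y \<longrightarrow> h \<in> hom C Y Z \<longrightarrow>
        cmp C h (cmp C g f) = cmp C (cmp C h g) f)"

definition monic :: "('o,'m) category \<Rightarrow> 'm \<Rightarrow> bool" where
  "monic C f \<longleftrightarrow> f \<in> Arr C \<and>
     (\<forall>W g h. g \<in> hom C W (Dom C f) \<longrightarrow> h \<in> hom C W (Dom C f) \<longrightarrow>
        cmp C f g = cmp C f h \<longrightarrow> g = h)"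

definition epic :: "('o,'m) category \<Rightarrow> 'm \<Rightarrow> bool" where
  "epic C f \<longleftrightarrow> f \<in> Arr C \<and>
     (\<forall>W g h. g \<in> hom C (Cod C f) W \<longrightarrow> h \<in> hom C (Cod C f) W \<longrightarrow>
        cmp C g f = cmp C h f \<longrightarrow> g = h)"

definition is_section :: "('o,'m) category \<Rightarrow> 'm \<Rightarrow> bool" where
  "is_section C f \<longleftrightarrow> f \<in> Arr C \<and>
     (\<exists>f' \<in> hom C (Cod C f) (Dom C f). cmp C f' f = idm C (Dom C f))"

definition is_retraction :: "('o,'m) category \<Rightarrow> 'm \<Rightarrow> bool" where
  "is_retraction C f \<longleftrightarrow> f \<in> Arr C \<and>
     (\<exists>f' \<in> hom C (Cod C f) (Dom C f). cmp C f f' = idm C (Cod C f))"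

definition zero_object :: "('o,'m) category \<Rightarrow> 'o \<Rightarrow> bool" where
  "zero_object C Z \<longleftrightarrow> Z \<in> Obj C \<and>
     (\<forall>X \<in> Obj C. (\<exists>!f. f \<in> hom C Z X) \<and> (\<exists>!f. f \<in> hom C X Z))"

definition zero_arrow :: "('o,'m) category \<Rightarrow> 'm \<Rightarrow> bool" where
  "zero_arrow C f \<longleftrightarrow> f \<in> Arr C \<and>
     (\<exists>Z a b. zero_object C Z \<and> a \<in> hom C (Dom C f) Z \<and> b \<in> hom C Z (Cod C f)
        \<and> f = cmp C b a)"

definition is_kernel :: "('o,'m) category \<Rightarrow> 'm \<Rightarrow> 'm \<Rightarrow> bool" where
  "is_kernel C f k \<longleftrightarrow> f \<in> Arr C \<and> k \<in> Arr C \<and> Cod C k = Dom C f \<and>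
     zero_arrow C (cmp C f k) \<and>
     (\<forall>g. g \<in> Arr C \<and> Cod C g = Dom C f \<and> zero_arrow C (cmp C f g) \<longrightarrow>
        (\<exists>!u. u \<in> hom C (Dom C g) (Dom C k) \<and> cmp C k u = g))"

definition is_cokernel :: "('o,'m) category \<Rightarrow> 'm \<Rightarrow> 'm \<Rightarrow> bool" where
  "is_cokernel C f c \<longleftrightarrow> f \<in> Arr C \<and> c \<in> Arr C \<and> Dom C c = Cod C f \<and>
     zero_arrow C (cmp C c f) \<and>
     (\<forall>g. g \<in> Arr C \<and> Dom C g = Cod C f \<and> zero_arrow C (cmp C g f) \<longrightarrow>
        (\<exists>!u. u \<in> hom C (Cod C c) (Cod C g) \<and> cmp C u c = g))"

definition is_product :: "('o,'m) category \<Rightarrow> 'i set \<Rightarrow> ('i \<Rightarrow> 'o) \<Rightarrow> 'o \<Rightarrow> ('i \<Rightarrow> 'm) \<Rightarrow> bool" where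
  "is_product C I N P p \<longleftrightarrow> P \<in> Obj C \<and> (\<forall>i \<in> I. p i \<in> hom C P (N i)) \<and>
     (\<forall>W q. W \<in> Obj C \<and> (\<forall>i \<in> I. q i \<in> hom C W (N i)) \<longrightarrow>
        (\<exists>!u. u \<in> hom C W P \<and> (\<forall>i \<in> I. cmp C (p i) u = q i)))"

definition is_coproduct :: "('o,'m) category \<Rightarrow> 'i set \<Rightarrow> ('i \<Rightarrow> 'o) \<Rightarrow> 'o \<Rightarrow> ('i \<Rightarrow> 'm) \<Rightarrow> bool" where
  "is_coproduct C I M S e \<longleftrightarrow> S \<in> Obj C \<and> (\<forall>i \<in> I. e i \<in> hom C (M i) S) \<and>
     (\<forall>W q. W \<in> Obj C \<and> (\<forall>i \<in> I. q i \<in> hom C (M i) W) \<longrightarrow>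
        (\<exists>!u. u \<in> hom C S W \<and> (\<forall>i \<in> I. cmp C u (e i) = q i)))"

text \<open>The additive structure is then uniquely determined.\<close>
definition abelian :: "('o,'m) category \<Rightarrow> bool" where
  "abelian C \<longleftrightarrow> is_category C \<and>
     (\<exists>Z. zero_object C Z) \<and>
     (\<forall>X \<in> Obj C. \<forall>Y \<in> Obj C.
        (\<exists>P p. is_product C (UNIV::bool set) (\<lambda>b. if b then X else Y) P p) \<and>
        (\<exists>S e. is_coproduct C (UNIV::bool set) (\<lambda>b. if b then X else Y) S e)) \<and>
     (\<forall>f \<in> Arr C. (\<exists>k. is_kernel C f k) \<and> (\<exists>c. is_cokernel C f c)) \<and>
     (\<forall>m. monic C m \<longrightarrow> (\<exists>f. is_kernel C f m)) \<and>
     (\<forall>e. epic C e \<longrightarrow> (\<exists>f. is_cokernel C f e))"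

definition fully_invariant :: "('o,'m) category \<Rightarrow> 'm \<Rightarrow> bool" where
  "fully_invariant C k \<longleftrightarrow> monic C k \<and>
     (\<forall>h \<in> hom C (Cod C k) (Cod C k). \<exists>\<alpha> \<in> hom C (Dom C k) (Dom C k).
        cmp C h k = cmp C k \<alpha>)"

definition fully_coinvariant :: "('o,'m) category \<Rightarrow> 'm \<Rightarrow> bool" where
  "fully_coinvariant C c \<longleftrightarrow> epic C c \<and>
     (\<forall>h \<in> hom C (Dom C c) (Dom C c). \<exists>\<gamma> \<in> hom C (Cod C c) (Cod C c).
        cmp C c h = cmp C \<gamma> c)"

definition weak_duo :: "('o,'m) category \<Rightarrow> 'o \<Rightarrow> bool" where
  "weak_duo C M \<longleftrightarrow> M \<in> Obj C \<and>
     (\<forall>s. is_section C s \<and> Cod C s = M \<longrightarrow> fully_invariant C s)"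

text \<open>A direct summand of M is represented by a section s : K \<rightarrow> M; a family of direct
  summands is a set F of such sections. d : D \<rightarrow> M is the intersection of the family
  (limit / meet of subobjects); u : U \<rightarrow> M is the sum (join of subobjects).\<close>
definition is_intersection :: "('o,'m) category \<Rightarrow> 'o \<Rightarrow> 'm set \<Rightarrow> 'm \<Rightarrow> bool" where
  "is_intersection C M F d \<longleftrightarrow> monic C d \<and> Cod C d = M \<and>
     (\<forall>s \<in> F. \<exists>t \<in> hom C (Dom C d) (Dom C s). cmp C s t = d) \<and>
     (\<forall>g. g \<in> Arr C \<and> Cod C g = M \<and>
          (\<forall>s \<in> F. \<exists>t \<in> hom C (Dom C g) (Dom C s). cmp C s t = g) \<longrightarrow>
        (\<exists>v \<in> hom C (Dom C g) (Dom C d). cmp C d v = g))"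

definition is_sum :: "('o,'m) category \<Rightarrow> 'o \<Rightarrow> 'm set \<Rightarrow> 'm \<Rightarrow> bool" where
  "is_sum C M F u \<longleftrightarrow> monic C u \<and> Cod C u = M \<and>
     (\<forall>s \<in> F. \<exists>t \<in> hom C (Dom C s) (Dom C u). cmp C u t = s) \<and>
     (\<forall>m. monic C m \<and> Cod C m = M \<and>
          (\<forall>s \<in> F. \<exists>t \<in> hom C (Dom C s) (Dom C m). cmp C m t = s) \<longrightarrow>
        (\<exists>v \<in> hom C (Dom C u) (Dom C m). cmp C m v = u))"

definition SSIP :: "('o,'m) category \<Rightarrow> 'o \<Rightarrow> bool" where
  "SSIP C M \<longleftrightarrow> M \<in> Obj C \<and>
     (\<forall>F. (\<forall>s \<in> F. is_section C s \<and> Cod C s = M) \<longrightarrow>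
        (\<exists>d. is_intersection C M F d \<and> is_section C d))"

definition SSSP :: "('o,'m) category \<Rightarrow> 'o \<Rightarrow> bool" where
  "SSSP C M \<longleftrightarrow> M \<in> Obj C \<and>
     (\<forall>F. (\<forall>s \<in> F. is_section C s \<and> Cod C s = M) \<longrightarrow>
        (\<exists>u. is_sum C M F u \<and> is_section C u))"

definition strongly_rickart :: "('o,'m) category \<Rightarrow> 'o \<Rightarrow> 'o \<Rightarrow> bool" where
  "strongly_rickart C M N \<longleftrightarrow>
     (\<forall>f \<in> hom C M N. \<forall>k. is_kernel C f k \<longrightarrow> is_section C k \<and> fully_invariant C k)"

definition dual_strongly_rickart :: "('o,'m) category \<Rightarrow> 'o \<Rightarrow> 'o \<Rightarrow> bool" where
  "dual_strongly_rickart C M N \<longleftrightarrow>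
     (\<forall>f \<in> hom C M N. \<forall>c. is_cokernel C f c \<longrightarrow> is_retraction C c \<and> fully_coinvariant C c)"

end

(*
  Part (1): the kernel of f : M \<rightarrow> \<Prod>N\<^sub>i is the intersection of the kernels of the components
  p\<^sub>i \<circ> f. These are direct summands of M, so by SSIP so is their intersection, and it is fully
  invariant because M is weak duo. Conversely, each N\<^sub>i is a retract of the product, and composing
  with a split monomorphism does not change kernels.

  Part (2) runs along the same lines: the cokernel of f : \<Coprod>M\<^sub>i \<rightarrow> N is the cokernel of the sum
  of the images of the f \<circ> e\<^sub>i, each a direct summand of N, and SSSP makes this sum a summand.
  SSIP and SSSP are not dual to each other (a sum is a join of subobjects, not a meet of
  quotients), so only the retract half of (2) is obtained in the opposite category.

  The one genuinely abelian ingredient is that the kernel of a split epimorphism is a direct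
  summand.
*)

theory Submission
  imports Defs
begin

lemma homD: "f \<in> hom C X Y \<Longrightarrow> f \<in> Arr C \<and> Dom C f = X \<and> Cod C f = Y"
  by (simp add: hom_def)

lemma arr_in_hom: "f \<in> Arr C \<Longrightarrow> f \<in> hom C (Dom C f) (Cod C f)"
  by (simp add: hom_def)

lemma comp_in_hom: "is_category C \<Longrightarrow> f \<in> hom C X Y \<Longrightarrow> g \<in> hom C Y Z \<Longrightarrow> cmp C g f \<in> hom C X Z"
  unfolding is_category_def by blast

lemma id_in_hom: "is_category C \<Longrightarrow> X \<in> Obj C \<Longrightarrow> idm C X \<in> hom C X X"
  unfolding is_category_def by blast

lemma comp_id_right: "is_category C \<Longrightarrow> f \<in> hom C X Y \<Longrightarrow> cmp C f (idm C X) = f"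
  unfolding is_category_def by blast

lemma comp_id_left: "is_category C \<Longrightarrow> f \<in> hom C X Y \<Longrightarrow> cmp C (idm C Y) f = f"
  unfolding is_category_def by blast

lemma comp_assoc:
  "is_category C \<Longrightarrow> f \<in> hom C W X \<Longrightarrow> g \<in> hom C X Y \<Longrightarrow> h \<in> hom C Y Z \<Longrightarrow>
   cmp C h (cmp C g f) = cmp C (cmp C h g) f"
  unfolding is_category_def by blast

lemma hom_objs: "is_category C \<Longrightarrow> f \<in> hom C X Y \<Longrightarrow> X \<in> Obj C \<and> Y \<in> Obj C"
  unfolding is_category_def hom_def by blast

section \<open>Opposite category\<close>

definition op_cat :: "('o,'m) category \<Rightarrow> ('o,'m) category" where
  "op_cat C = \<lparr>Obj = Obj C, Arr = Arr C, Dom = Cod C, Cod = Dom C,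
     cmp = (\<lambda>g f. cmp C f g), idm = idm C\<rparr>"

lemma op_cat_simps [simp]:
  "Obj (op_cat C) = Obj C" "Arr (op_cat C) = Arr C" "Dom (op_cat C) = Cod C"
  "Cod (op_cat C) = Dom C" "cmp (op_cat C) g f = cmp C f g" "idm (op_cat C) = idm C"
  by (simp_all add: op_cat_def)

lemma hom_op_cat [simp]: "hom (op_cat C) X Y = hom C Y X"
  by (auto simp: hom_def)

lemma op_cat_op_cat [simp]: "op_cat (op_cat C) = C"
  by (simp add: op_cat_def)

lemma is_category_op_catI: "is_category C \<Longrightarrow> is_category (op_cat C)"
  unfolding is_category_def hom_op_cat op_cat_simps by (intro conjI; metis)

lemma is_category_op_cat [simp]: "is_category (op_cat C) \<longleftrightarrow> is_category C"
  by (metis is_category_op_catI op_cat_op_cat)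

lemma monic_op_cat [simp]: "monic (op_cat C) f \<longleftrightarrow> epic C f"
  and epic_op_cat [simp]: "epic (op_cat C) f \<longleftrightarrow> monic C f"
  unfolding monic_def epic_def by simp_all

lemma is_section_op_cat [simp]: "is_section (op_cat C) f \<longleftrightarrow> is_retraction C f"
  unfolding is_section_def is_retraction_def by simp

lemma zero_object_op_cat [simp]: "zero_object (op_cat C) Z \<longleftrightarrow> zero_object C Z"
  unfolding zero_object_def by auto

lemma zero_arrow_op_cat [simp]: "zero_arrow (op_cat C) f \<longleftrightarrow> zero_arrow C f"
  unfolding zero_arrow_def by auto

lemma is_kernel_op_cat [simp]: "is_kernel (op_cat C) f = is_cokernel C f"
  and is_cokernel_op_cat [simp]: "is_cokernel (op_cat C) f = is_kernel C f"
  by (simp_all add: fun_eq_iff is_kernel_def is_cokernel_def)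

lemma is_product_op_cat [simp]: "is_product (op_cat C) I N P = is_coproduct C I N P"
  and is_coproduct_op_cat [simp]: "is_coproduct (op_cat C) I N P = is_product C I N P"
  by (simp_all add: fun_eq_iff is_product_def is_coproduct_def)

lemma abelian_op_cat [simp]: "abelian (op_cat C) \<longleftrightarrow> abelian C"
  unfolding abelian_def by auto

lemma fully_invariant_op_cat [simp]: "fully_invariant (op_cat C) k \<longleftrightarrow> fully_coinvariant C k"
  unfolding fully_invariant_def fully_coinvariant_def by simp

lemma strongly_rickart_op_cat [simp]:
  "strongly_rickart (op_cat C) M N \<longleftrightarrow> dual_strongly_rickart C N M"
  unfolding strongly_rickart_def dual_strongly_rickart_def by simp

lemma zero_arrow_in_hom: "zero_arrow C f \<Longrightarrow> f \<in> hom C (Dom C f) (Cod C f)"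
  unfolding zero_arrow_def hom_def by blast

lemma comp_zero_arrow:
  assumes cat: "is_category C" and z: "zero_arrow C f" and g: "g \<in> hom C (Cod C f) Y"
  shows "zero_arrow C (cmp C g f)"
proof -
  obtain Z a b where Z: "zero_object C Z" and a: "a \<in> hom C (Dom C f) Z"
    and b: "b \<in> hom C Z (Cod C f)" and f: "f = cmp C b a"
    using z unfolding zero_arrow_def by blast
  have "cmp C g f = cmp C (cmp C g b) a"
    using f comp_assoc[OF cat a b g] by simp
  moreover have "cmp C g f \<in> hom C (Dom C f) Y"
    using comp_in_hom[OF cat zero_arrow_in_hom[OF z] g] .
  ultimately show ?thesis
    unfolding zero_arrow_def using Z a comp_in_hom[OF cat b g] homD by metis
qed

lemma zero_arrow_comp:
  "is_category C \<Longrightarrow> zero_arrow C f \<Longrightarrow> g \<in> hom C X (Dom C f) \<Longrightarrow> zero_arrow C (cmp C f g)"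
  using comp_zero_arrow[of "op_cat C" f g X] by simp

lemma zero_object_unique_arrows:
  assumes "zero_object C Z" and "X \<in> Obj C"
  shows "f \<in> hom C X Z \<Longrightarrow> g \<in> hom C X Z \<Longrightarrow> f = g"
    and "f \<in> hom C Z X \<Longrightarrow> g \<in> hom C Z X \<Longrightarrow> f = g"
  using assms unfolding zero_object_def by metis+

lemma zero_object_arrows_exist:
  assumes "zero_object C Z" and "X \<in> Obj C"
  obtains a b where "a \<in> hom C X Z" and "b \<in> hom C Z X"
  using assms unfolding zero_object_def by metis

lemma zero_arrow_unique:
  assumes cat: "is_category C" and zf: "zero_arrow C f" and zg: "zero_arrow C g"
    and dom: "Dom C f = Dom C g" and cod: "Cod C f = Cod C g"
  shows "f = g"
proof -
  obtain Z a b where Z: "zero_object C Z" and a: "a \<in> hom C (Dom C f) Z"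
    and b: "b \<in> hom C Z (Cod C f)" and f: "f = cmp C b a"
    using zf unfolding zero_arrow_def by blast
  obtain Z' a' b' where Z': "zero_object C Z'" and a': "a' \<in> hom C (Dom C f) Z'"
    and b': "b' \<in> hom C Z' (Cod C f)" and g: "g = cmp C b' a'"
    using zg dom cod unfolding zero_arrow_def by auto
  have objs: "Z \<in> Obj C" "Dom C f \<in> Obj C" "Cod C f \<in> Obj C"
    using hom_objs[OF cat a] hom_objs[OF cat b] by auto
  obtain \<phi> where \<phi>: "\<phi> \<in> hom C Z Z'"
    using zero_object_arrows_exist[OF Z' objs(1)] by metis
  have "a' = cmp C \<phi> a"
    using zero_object_unique_arrows(1)[OF Z' objs(2) a' comp_in_hom[OF cat a \<phi>]] .
  moreover have "b = cmp C b' \<phi>"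
    using zero_object_unique_arrows(2)[OF Z objs(3) b comp_in_hom[OF cat \<phi> b']] .
  ultimately show ?thesis
    using f g comp_assoc[OF cat a \<phi> b'] by simp
qed

lemma zero_arrow_exists:
  assumes cat: "is_category C" and Z: "zero_object C Z" and "X \<in> Obj C" and "Y \<in> Obj C"
  obtains z where "z \<in> hom C X Y" and "zero_arrow C z"
proof -
  obtain a b where a: "a \<in> hom C X Z" and b: "b \<in> hom C Z Y"
    using zero_object_arrows_exist[OF Z] assms by metis
  have "cmp C b a \<in> hom C X Y"
    using comp_in_hom[OF cat a b] .
  then show thesis
    using that Z a b homD unfolding zero_arrow_def by metis
qed

lemma abelian_is_category: "abelian C \<Longrightarrow> is_category C"
  unfolding abelian_def by blast

lemma abelian_zero_arrow_exists:
  "abelian C \<Longrightarrow> X \<in> Obj C \<Longrightarrow> Y \<in> Obj C \<Longrightarrow> \<exists>z \<in> hom C X Y. zero_arrow C z"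
  unfolding abelian_def by (metis zero_arrow_exists)

lemma abelian_kernel_exists: "abelian C \<Longrightarrow> f \<in> Arr C \<Longrightarrow> \<exists>k. is_kernel C f k"
  and abelian_cokernel_exists: "abelian C \<Longrightarrow> f \<in> Arr C \<Longrightarrow> \<exists>c. is_cokernel C f c"
  and abelian_monic_is_kernel: "abelian C \<Longrightarrow> monic C m \<Longrightarrow> \<exists>f. is_kernel C f m"
  and abelian_binary_product_exists: "abelian C \<Longrightarrow> X \<in> Obj C \<Longrightarrow> Y \<in> Obj C \<Longrightarrow>
     \<exists>P p. is_product C (UNIV::bool set) (\<lambda>b. if b then X else Y) P p"
  unfolding abelian_def by blast+

lemma kernel_in_hom: "is_kernel C f k \<Longrightarrow> k \<in> hom C (Dom C k) (Dom C f)"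
  unfolding is_kernel_def hom_def by auto

lemma kernel_comp_zero: "is_kernel C f k \<Longrightarrow> zero_arrow C (cmp C f k)"
  unfolding is_kernel_def by blast

lemma kernel_factor_unique:
  assumes k: "is_kernel C f k" and g: "g \<in> hom C W (Dom C f)" and z: "zero_arrow C (cmp C f g)"
  shows "\<exists>!u. u \<in> hom C W (Dom C k) \<and> cmp C k u = g"
proof -
  have "\<exists>!u. u \<in> hom C (Dom C g) (Dom C k) \<and> cmp C k u = g"
    using k z homD[OF g] unfolding is_kernel_def by blast
  then show ?thesis
    using homD[OF g] by simp
qed

lemma kernel_factor:
  assumes "is_kernel C f k" and "g \<in> hom C W (Dom C f)" and "zero_arrow C (cmp C f g)"
  obtains u where "u \<in> hom C W (Dom C k)" and "cmp C k u = g"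
  using kernel_factor_unique[OF assms] by blast

lemma kernel_monic:
  assumes cat: "is_category C" and k: "is_kernel C f k"
  shows "monic C k"
  unfolding monic_def
proof (intro conjI allI impI)
  have kh: "k \<in> hom C (Dom C k) (Dom C f)"
    using kernel_in_hom[OF k] .
  then show "k \<in> Arr C"
    by (simp add: hom_def)
  fix W g h assume g: "g \<in> hom C W (Dom C k)" and h: "h \<in> hom C W (Dom C k)"
    and eq: "cmp C k g = cmp C k h"
  have f: "f \<in> hom C (Dom C f) (Cod C f)"
    using k unfolding is_kernel_def by (simp add: arr_in_hom)
  have "zero_arrow C (cmp C f (cmp C k g))"
    using zero_arrow_comp[OF cat kernel_comp_zero[OF k], of g W] g comp_assoc[OF cat g kh f]
      homD[OF comp_in_hom[OF cat kh f]] by simp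
  with kernel_factor_unique[OF k comp_in_hom[OF cat g kh]] show "g = h"
    using g h eq by (auto elim: ex1E)
qed

lemma kernel_factors_iff:
  assumes cat: "is_category C" and k: "is_kernel C f k" and g: "g \<in> hom C W (Dom C f)"
  shows "zero_arrow C (cmp C f g) \<longleftrightarrow> (\<exists>t \<in> hom C W (Dom C k). cmp C k t = g)"
proof
  assume "zero_arrow C (cmp C f g)"
  then show "\<exists>t \<in> hom C W (Dom C k). cmp C k t = g"
    using kernel_factor[OF k g] by blast
next
  assume "\<exists>t \<in> hom C W (Dom C k). cmp C k t = g"
  then obtain t where t: "t \<in> hom C W (Dom C k)" and kt: "cmp C k t = g"
    by blast
  have f: "f \<in> hom C (Dom C f) (Cod C f)"
    using k unfolding is_kernel_def by (simp add: arr_in_hom)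
  note kf = kernel_in_hom[OF k]
  show "zero_arrow C (cmp C f g)"
    using zero_arrow_comp[OF cat kernel_comp_zero[OF k], of t] t kt comp_assoc[OF cat t kf f]
      homD[OF comp_in_hom[OF cat kf f]] by simp
qed

lemma kernel_factors_through_kernel_of_comp:
  assumes cat: "is_category C" and f: "f \<in> hom C M N" and h: "h \<in> hom C N P"
    and k: "is_kernel C f k" and K: "is_kernel C (cmp C h f) K"
  obtains t where "t \<in> hom C (Dom C k) (Dom C K)" and "cmp C K t = k"
proof -
  have k': "k \<in> hom C (Dom C k) M"
    using kernel_in_hom[OF k] homD[OF f] by simp
  have "zero_arrow C (cmp C (cmp C h f) k)"
    using comp_zero_arrow[OF cat kernel_comp_zero[OF k], of h P] comp_assoc[OF cat k' f h] h
      homD[OF comp_in_hom[OF cat k' f]] by simp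
  then show thesis
    using kernel_factor[OF K, of k] that k' homD[OF comp_in_hom[OF cat f h]] by metis
qed

lemma kernel_comp_section:
  assumes cat: "is_category C" and f: "f \<in> hom C M N" and s: "s \<in> hom C N P"
    and r: "r \<in> hom C P N" and rs: "cmp C r s = idm C N" and k: "is_kernel C f k"
  shows "is_kernel C (cmp C s f) k"
  unfolding is_kernel_def
proof (intro conjI allI impI)
  have k': "k \<in> hom C (Dom C k) M"
    using kernel_in_hom[OF k] homD[OF f] by simp
  show "cmp C s f \<in> Arr C" "k \<in> Arr C" "Cod C k = Dom C (cmp C s f)"
    using homD[OF comp_in_hom[OF cat f s]] homD[OF k'] by auto
  show "zero_arrow C (cmp C (cmp C s f) k)"
    using comp_zero_arrow[OF cat kernel_comp_zero[OF k], of s P] comp_assoc[OF cat k' f s] s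
      homD[OF comp_in_hom[OF cat k' f]] by simp
  fix h assume "h \<in> Arr C \<and> Cod C h = Dom C (cmp C s f) \<and> zero_arrow C (cmp C (cmp C s f) h)"
  then have h: "h \<in> hom C (Dom C h) M" and z: "zero_arrow C (cmp C (cmp C s f) h)"
    using homD[OF comp_in_hom[OF cat f s]] by (auto simp: hom_def)
  have fh: "cmp C f h \<in> hom C (Dom C h) N"
    using comp_in_hom[OF cat h f] .
  have "cmp C f h = cmp C r (cmp C (cmp C s f) h)"
    using rs comp_assoc[OF cat fh s r] comp_assoc[OF cat h f s] comp_id_left[OF cat fh] by simp
  then have "zero_arrow C (cmp C f h)"
    using comp_zero_arrow[OF cat z, of r N] r homD[OF comp_in_hom[OF cat h comp_in_hom[OF cat f s]]]
    by simp
  then show "\<exists>!u. u \<in> hom C (Dom C h) (Dom C k) \<and> cmp C k u = h"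
    using kernel_factor_unique[OF k] h homD[OF f] by simp
qed

lemma cokernel_in_hom: "is_cokernel C f c \<Longrightarrow> c \<in> hom C (Cod C f) (Cod C c)"
  using kernel_in_hom[of "op_cat C" f c] by simp

lemma cokernel_comp_zero: "is_cokernel C f c \<Longrightarrow> zero_arrow C (cmp C c f)"
  using kernel_comp_zero[of "op_cat C" f c] by simp

lemma cokernel_factor_unique:
  "is_cokernel C f c \<Longrightarrow> g \<in> hom C (Cod C f) W \<Longrightarrow> zero_arrow C (cmp C g f) \<Longrightarrow>
   \<exists>!u. u \<in> hom C (Cod C c) W \<and> cmp C u c = g"
  using kernel_factor_unique[of "op_cat C" f c g W] by simp

lemma cokernel_factor:
  assumes "is_cokernel C f c" and "g \<in> hom C (Cod C f) W" and "zero_arrow C (cmp C g f)"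
  obtains u where "u \<in> hom C (Cod C c) W" and "cmp C u c = g"
  using cokernel_factor_unique[OF assms] by blast

lemma cokernel_epic: "is_category C \<Longrightarrow> is_cokernel C f c \<Longrightarrow> epic C c"
  using kernel_monic[of "op_cat C" f c] by simp

lemma cokernel_factors_through_cokernel_of_comp:
  assumes "is_category C" and "f \<in> hom C M N" and "h \<in> hom C L M"
    and "is_cokernel C f c" and "is_cokernel C (cmp C f h) c'"
  obtains t where "t \<in> hom C (Cod C c') (Cod C c)" and "cmp C t c' = c"
  using kernel_factors_through_kernel_of_comp[of "op_cat C" f N M h L c c'] assms by auto

lemma kernel_of_zero_arrow_split:
  assumes cat: "is_category C" and k: "is_kernel C h k" and z: "zero_arrow C h"
  obtains u where "u \<in> hom C (Dom C h) (Dom C k)" and "cmp C k u = idm C (Dom C h)"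
proof -
  have h: "h \<in> hom C (Dom C h) (Cod C h)"
    using zero_arrow_in_hom[OF z] .
  have id: "idm C (Dom C h) \<in> hom C (Dom C h) (Dom C h)"
    using id_in_hom[OF cat] hom_objs[OF cat h] by blast
  have "zero_arrow C (cmp C h (idm C (Dom C h)))"
    using z comp_id_right[OF cat h] by simp
  from kernel_factor[OF k id this] show thesis
    using that by blast
qed

lemma left_inverse_monic:
  assumes cat: "is_category C" and s: "s \<in> hom C X Y" and r: "r \<in> hom C Y X"
    and rs: "cmp C r s = idm C X"
  shows "monic C s"
  unfolding monic_def
proof (intro conjI allI impI)
  show "s \<in> Arr C"
    using homD[OF s] by simp
  fix W g h assume "g \<in> hom C W (Dom C s)" and "h \<in> hom C W (Dom C s)"
    and eq: "cmp C s g = cmp C s h"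
  then have g: "g \<in> hom C W X" and h: "h \<in> hom C W X"
    using homD[OF s] by auto
  have "g = cmp C r (cmp C s g)"
    using rs comp_assoc[OF cat g s r] comp_id_left[OF cat g] by simp
  also have "\<dots> = h"
    using rs eq comp_assoc[OF cat h s r] comp_id_left[OF cat h] by simp
  finally show "g = h" .
qed

lemma right_inverse_epic:
  "is_category C \<Longrightarrow> c \<in> hom C Y X \<Longrightarrow> r \<in> hom C X Y \<Longrightarrow> cmp C c r = idm C X \<Longrightarrow> epic C c"
  using left_inverse_monic[of "op_cat C" c X Y r] by simp

lemma is_sectionE:
  assumes "is_section C s"
  obtains r where "r \<in> hom C (Cod C s) (Dom C s)" and "cmp C r s = idm C (Dom C s)"
  using assms unfolding is_section_def by blast

lemma is_sectionI:
  "s \<in> hom C X Y \<Longrightarrow> r \<in> hom C Y X \<Longrightarrow> cmp C r s = idm C X \<Longrightarrow> is_section C s"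
  unfolding is_section_def hom_def by auto

lemma monicD:
  "monic C f \<Longrightarrow> g \<in> hom C W (Dom C f) \<Longrightarrow> h \<in> hom C W (Dom C f) \<Longrightarrow> cmp C f g = cmp C f h \<Longrightarrow> g = h"
  unfolding monic_def by blast

lemma epicD:
  "epic C f \<Longrightarrow> g \<in> hom C (Cod C f) W \<Longrightarrow> h \<in> hom C (Cod C f) W \<Longrightarrow> cmp C g f = cmp C h f \<Longrightarrow> g = h"
  unfolding epic_def by blast

lemma monic_in_hom: "monic C f \<Longrightarrow> f \<in> hom C (Dom C f) (Cod C f)"
  unfolding monic_def by (simp add: arr_in_hom)

lemma section_if_same_subobject:
  assumes cat: "is_category C" and km: "monic C k" and k: "k \<in> hom C K M" and d: "d \<in> hom C D M"
    and ds: "is_section C d" and v: "v \<in> hom C K D" and dv: "cmp C d v = k"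
    and w: "w \<in> hom C D K" and kw: "cmp C k w = d"
  shows "is_section C k"
proof -
  obtain d' where d': "d' \<in> hom C M D" and d'd: "cmp C d' d = idm C D"
    using ds homD[OF d] by (auto elim: is_sectionE)
  have "cmp C k (cmp C w v) = cmp C k (idm C K)"
    using comp_assoc[OF cat v w k] kw dv comp_id_right[OF cat k] by simp
  then have wv: "cmp C w v = idm C K"
    using monicD[OF km, of "cmp C w v" K "idm C K"] comp_in_hom[OF cat v w]
      id_in_hom[OF cat] homD[OF k] hom_objs[OF cat k] by simp
  have "cmp C (cmp C w d') k = cmp C w (cmp C (cmp C d' d) v)"
    using dv comp_assoc[OF cat k d' w] comp_assoc[OF cat v d d'] by simp
  then have "cmp C (cmp C w d') k = idm C K"
    using d'd comp_id_left[OF cat v] wv by simp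
  then show ?thesis
    using is_sectionI[OF k comp_in_hom[OF cat d' w]] by simp
qed

lemma monic_is_kernel_of_cokernel:
  assumes a: "abelian C" and m: "monic C r" and g: "is_cokernel C r g"
  shows "is_kernel C g r"
proof -
  have cat: "is_category C"
    using abelian_is_category[OF a] .
  obtain g0 where k0: "is_kernel C g0 r"
    using abelian_monic_is_kernel[OF a m] by blast
  have r: "r \<in> hom C (Dom C r) (Cod C r)"
    using monic_in_hom[OF m] .
  have g: "g \<in> hom C (Cod C r) (Cod C g)"
    using cokernel_in_hom[OF g] .
  have g0: "g0 \<in> hom C (Cod C r) (Cod C g0)"
    using k0 kernel_in_hom[OF k0] unfolding is_kernel_def by (simp add: arr_in_hom)
  obtain w where w: "w \<in> hom C (Cod C g) (Cod C g0)" and wg: "cmp C w g = g0"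
    using cokernel_factor[OF \<open>is_cokernel C r g\<close> g0 kernel_comp_zero[OF k0]] by blast
  show ?thesis
    unfolding is_kernel_def
  proof (intro conjI allI impI)
    show "g \<in> Arr C" "r \<in> Arr C" "Cod C r = Dom C g" "zero_arrow C (cmp C g r)"
      using homD[OF g] homD[OF r] cokernel_comp_zero[OF \<open>is_cokernel C r g\<close>] by auto
    fix h assume "h \<in> Arr C \<and> Cod C h = Dom C g \<and> zero_arrow C (cmp C g h)"
    then have h: "h \<in> hom C (Dom C h) (Cod C r)" and gh: "zero_arrow C (cmp C g h)"
      using homD[OF g] by (auto simp: hom_def)
    have "zero_arrow C (cmp C g0 h)"
      using comp_zero_arrow[OF cat gh, of w] w wg comp_assoc[OF cat h g w]
        homD[OF comp_in_hom[OF cat h g]] by simp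
    then obtain u where u: "u \<in> hom C (Dom C h) (Dom C r)" and ru: "cmp C r u = h"
      using kernel_factor[OF k0, of h] h homD[OF g0] by auto
    show "\<exists>!u. u \<in> hom C (Dom C h) (Dom C r) \<and> cmp C r u = h"
      using u ru monicD[OF m] by blast
  qed
qed

lemma epic_is_cokernel_of_kernel:
  "abelian C \<Longrightarrow> epic C c \<Longrightarrow> is_kernel C c m \<Longrightarrow> is_cokernel C m c"
  using monic_is_kernel_of_cokernel[of "op_cat C" c m] by simp

lemma monic_epic_is_section:
  assumes a: "abelian C" and m: "monic C f" and e: "epic C f"
  shows "is_section C f"
proof -
  have cat: "is_category C"
    using abelian_is_category[OF a] .
  obtain h where k: "is_kernel C h f"
    using abelian_monic_is_kernel[OF a m] by blast
  have f: "f \<in> hom C (Dom C f) (Cod C f)"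
    using monic_in_hom[OF m] .
  have h: "h \<in> hom C (Cod C f) (Cod C h)"
    using k kernel_in_hom[OF k] homD[OF f] unfolding is_kernel_def by (simp add: arr_in_hom)
  obtain z where z: "z \<in> hom C (Cod C f) (Cod C h)" and zz: "zero_arrow C z"
    using abelian_zero_arrow_exists[OF a] hom_objs[OF cat h] by blast
  have "cmp C h f = cmp C z f"
    using zero_arrow_unique[OF cat kernel_comp_zero[OF k] zero_arrow_comp[OF cat zz, of f]]
      homD[OF z] homD[OF comp_in_hom[OF cat f h]] homD[OF comp_in_hom[OF cat f z]] f by simp
  then have "zero_arrow C h"
    using epicD[OF e h z] zz by simp
  then obtain u where u: "u \<in> hom C (Cod C f) (Dom C f)" and fu: "cmp C f u = idm C (Cod C f)"
    using kernel_of_zero_arrow_split[OF cat k] homD[OF h] by metis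
  have "cmp C f (cmp C u f) = cmp C f (idm C (Dom C f))"
    using comp_assoc[OF cat f u f] fu comp_id_left[OF cat f] comp_id_right[OF cat f] by simp
  then have "cmp C u f = idm C (Dom C f)"
    using monicD[OF m comp_in_hom[OF cat f u] id_in_hom[OF cat]] hom_objs[OF cat f] by simp
  then show ?thesis
    using is_sectionI[OF f u] by simp
qed

lemma product_proj_in_hom: "is_product C I N P p \<Longrightarrow> i \<in> I \<Longrightarrow> p i \<in> hom C P (N i)"
  unfolding is_product_def by simp

lemma product_tuple_exists:
  assumes "is_product C I N P p" and "W \<in> Obj C" and "\<forall>i \<in> I. q i \<in> hom C W (N i)"
  obtains u where "u \<in> hom C W P" and "\<forall>i \<in> I. cmp C (p i) u = q i"
  using assms unfolding is_product_def by blast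

lemma product_arrow_eqI:
  assumes cat: "is_category C" and P: "is_product C I N P p"
    and u: "u \<in> hom C W P" and u': "u' \<in> hom C W P" and eq: "\<forall>i \<in> I. cmp C (p i) u = cmp C (p i) u'"
  shows "u = u'"
proof -
  have "\<forall>i \<in> I. cmp C (p i) u \<in> hom C W (N i)"
    using comp_in_hom[OF cat u product_proj_in_hom[OF P]] by simp
  then have "\<exists>!v. v \<in> hom C W P \<and> (\<forall>i \<in> I. cmp C (p i) v = cmp C (p i) u)"
    using P hom_objs[OF cat u] unfolding is_product_def by simp
  then show ?thesis
    using u u' eq by (auto elim: ex1E)
qed

lemma product_zero_arrowI:
  assumes a: "abelian C" and P: "is_product C I N P p" and f: "f \<in> hom C W P"
    and zero: "\<forall>i \<in> I. zero_arrow C (cmp C (p i) f)"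
  shows "zero_arrow C f"
proof -
  have cat: "is_category C"
    using abelian_is_category[OF a] .
  obtain z where z: "z \<in> hom C W P" and zz: "zero_arrow C z"
    using abelian_zero_arrow_exists[OF a] hom_objs[OF cat f] by blast
  have "\<forall>i \<in> I. cmp C (p i) f = cmp C (p i) z"
  proof
    fix i assume i: "i \<in> I"
    note pi = product_proj_in_hom[OF P i]
    show "cmp C (p i) f = cmp C (p i) z"
      using zero_arrow_unique[OF cat zero[rule_format, OF i] comp_zero_arrow[OF cat zz, of "p i"]]
        pi homD[OF z] homD[OF comp_in_hom[OF cat f pi]] homD[OF comp_in_hom[OF cat z pi]] by simp
  qed
  then show ?thesis
    using product_arrow_eqI[OF cat P f z] zz by simp
qed

lemma product_proj_split:
  assumes a: "abelian C" and P: "is_product C I N P p" and N: "\<forall>j \<in> I. N j \<in> Obj C" and i: "i \<in> I"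
  obtains s where "s \<in> hom C (N i) P" and "cmp C (p i) s = idm C (N i)"
proof -
  have cat: "is_category C"
    using abelian_is_category[OF a] .
  have "\<forall>j \<in> I. \<exists>q. q \<in> hom C (N i) (N j) \<and> (j = i \<longrightarrow> q = idm C (N i))"
    using id_in_hom[OF cat] abelian_zero_arrow_exists[OF a] N i by metis
  then obtain q where q: "\<forall>j \<in> I. q j \<in> hom C (N i) (N j)" and qi: "q i = idm C (N i)"
    using i by metis
  obtain s where "s \<in> hom C (N i) P" and "\<forall>j \<in> I. cmp C (p j) s = q j"
    using product_tuple_exists[OF P _ q] N i by blast
  then show thesis
    using that qi i by simp
qed

lemma coproduct_inj_in_hom: "is_coproduct C I N S e \<Longrightarrow> i \<in> I \<Longrightarrow> e i \<in> hom C (N i) S"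
  using product_proj_in_hom[of "op_cat C" I N S e] by simp

lemma coproduct_cotuple_exists:
  assumes "is_coproduct C I N S e" and "W \<in> Obj C" and "\<forall>i \<in> I. q i \<in> hom C (N i) W"
  obtains u where "u \<in> hom C S W" and "\<forall>i \<in> I. cmp C u (e i) = q i"
  using product_tuple_exists[of "op_cat C" I N S e W q] assms by auto

lemma coproduct_arrow_eqI:
  "is_category C \<Longrightarrow> is_coproduct C I N S e \<Longrightarrow> u \<in> hom C S W \<Longrightarrow> u' \<in> hom C S W \<Longrightarrow>
   \<forall>i \<in> I. cmp C u (e i) = cmp C u' (e i) \<Longrightarrow> u = u'"
  using product_arrow_eqI[of "op_cat C" I N S e u W u'] by simp

section \<open>Split epimorphisms in abelian categories\<close>

lemma factors_through_diagonal_iff: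
  assumes cat: "is_category C" and P: "is_product C (UNIV::bool set) (\<lambda>_. Y) P p"
    and \<delta>: "\<delta> \<in> hom C Y P" and p\<delta>: "\<And>b. cmp C (p b) \<delta> = idm C Y" and h: "h \<in> hom C W P"
  shows "(\<exists>t \<in> hom C W Y. cmp C \<delta> t = h) \<longleftrightarrow> cmp C (p True) h = cmp C (p False) h"
proof -
  have p: "\<And>b. p b \<in> hom C P Y"
    using product_proj_in_hom[OF P] by simp
  show ?thesis
  proof
    assume "\<exists>t \<in> hom C W Y. cmp C \<delta> t = h"
    then obtain t where t: "t \<in> hom C W Y" and \<delta>t: "cmp C \<delta> t = h"
      by blast
    have "cmp C (p b) h = t" for b
      using \<delta>t comp_assoc[OF cat t \<delta> p] p\<delta> comp_id_left[OF cat t] by simp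
    then show "cmp C (p True) h = cmp C (p False) h"
      by simp
  next
    assume eq: "cmp C (p True) h = cmp C (p False) h"
    have t: "cmp C (p True) h \<in> hom C W Y"
      using comp_in_hom[OF cat h p] .
    have "cmp C (p b) (cmp C \<delta> (cmp C (p True) h)) = cmp C (p b) h" for b
      using comp_assoc[OF cat t \<delta> p] p\<delta> comp_id_left[OF cat t] eq by (cases b) simp_all
    then have "cmp C \<delta> (cmp C (p True) h) = h"
      using product_arrow_eqI[OF cat P comp_in_hom[OF cat t \<delta>] h] by blast
    then show "\<exists>t \<in> hom C W Y. cmp C \<delta> t = h"
      using t by blast
  qed
qed

text \<open>The equalizer of \<open>x\<close> and \<open>y\<close> is the kernel of \<open>g \<circ> \<langle>x, y\<rangle>\<close>, where \<open>g\<close> is a morphism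
  whose kernel is the diagonal \<open>Y \<rightarrow> Y \<times> Y\<close>.\<close>
lemma equalizer_exists:
  assumes a: "abelian C" and x: "x \<in> hom C X Y" and y: "y \<in> hom C X Y"
  obtains e where "monic C e" and "Cod C e = X" and "cmp C x e = cmp C y e"
    and "\<And>h W. h \<in> hom C W X \<Longrightarrow> cmp C x h = cmp C y h \<Longrightarrow> \<exists>v \<in> hom C W (Dom C e). cmp C e v = h"
proof -
  have cat: "is_category C"
    using abelian_is_category[OF a] .
  have X: "X \<in> Obj C" and Y: "Y \<in> Obj C"
    using hom_objs[OF cat x] by auto
  obtain P p where P: "is_product C (UNIV::bool set) (\<lambda>_. Y) P p"
    using abelian_binary_product_exists[OF a Y Y] by auto
  have p: "\<And>b. p b \<in> hom C P Y"
    using product_proj_in_hom[OF P] by simp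
  obtain \<delta> where \<delta>: "\<delta> \<in> hom C Y P" and p\<delta>: "\<And>b. cmp C (p b) \<delta> = idm C Y"
    using product_tuple_exists[OF P Y, of "\<lambda>_. idm C Y"] id_in_hom[OF cat Y] by auto
  obtain g where g\<delta>: "is_kernel C g \<delta>"
    using abelian_monic_is_kernel[OF a left_inverse_monic[OF cat \<delta> p p\<delta>]] by blast
  have g: "g \<in> hom C P (Cod C g)"
    using g\<delta> kernel_in_hom[OF g\<delta>] homD[OF \<delta>] unfolding is_kernel_def by (simp add: arr_in_hom)
  have "\<forall>b \<in> UNIV. (if b then x else y) \<in> hom C X Y"
    using x y by simp
  then obtain w where w: "w \<in> hom C X P" and pw: "\<forall>b \<in> UNIV. cmp C (p b) w = (if b then x else y)"
    by (rule product_tuple_exists[OF P X])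
  have gw: "cmp C g w \<in> hom C X (Cod C g)"
    using comp_in_hom[OF cat w g] .
  have equalizes_iff: "zero_arrow C (cmp C (cmp C g w) h) \<longleftrightarrow> cmp C x h = cmp C y h"
    if h: "h \<in> hom C W X" for h W
  proof -
    have wh: "cmp C w h \<in> hom C W P"
      using comp_in_hom[OF cat h w] .
    have "zero_arrow C (cmp C (cmp C g w) h) \<longleftrightarrow> (\<exists>t \<in> hom C W Y. cmp C \<delta> t = cmp C w h)"
      using kernel_factors_iff[OF cat g\<delta>, of "cmp C w h" W] wh comp_assoc[OF cat h w g]
        homD[OF g] homD[OF \<delta>] by simp
    also have "\<dots> \<longleftrightarrow> cmp C (p True) (cmp C w h) = cmp C (p False) (cmp C w h)"
      using factors_through_diagonal_iff[OF cat P \<delta> p\<delta> wh] .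
    also have "\<dots> \<longleftrightarrow> cmp C x h = cmp C y h"
      using comp_assoc[OF cat h w p] pw by simp
    finally show ?thesis .
  qed
  obtain e where e: "is_kernel C (cmp C g w) e"
    using abelian_kernel_exists[OF a] homD[OF gw] by blast
  have eX: "e \<in> hom C (Dom C e) X"
    using kernel_in_hom[OF e] homD[OF gw] by simp
  show thesis
  proof (rule that)
    show "monic C e"
      using kernel_monic[OF cat e] .
    show "Cod C e = X"
      using homD[OF eX] by simp
    show "cmp C x e = cmp C y e"
      using equalizes_iff[OF eX] kernel_comp_zero[OF e] by simp
    fix h W assume "h \<in> hom C W X" and "cmp C x h = cmp C y h"
    then show "\<exists>v \<in> hom C W (Dom C e). cmp C e v = h"
      using kernel_factors_iff[OF cat e, of h W] equalizes_iff homD[OF gw] by simp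
  qed
qed

lemma cokernel_and_section_jointly_epic:
  assumes a: "abelian C" and mc: "is_cokernel C m c" and c: "c \<in> hom C X Q"
    and r: "r \<in> hom C Q X" and cr: "cmp C c r = idm C Q"
    and x: "x \<in> hom C X Y" and y: "y \<in> hom C X Y"
    and xm: "cmp C x m = cmp C y m" and xr: "cmp C x r = cmp C y r"
  shows "x = y"
proof -
  have cat: "is_category C"
    using abelian_is_category[OF a] .
  have m: "m \<in> hom C (Dom C m) X"
    using mc cokernel_in_hom[OF mc] homD[OF c] unfolding is_cokernel_def by (simp add: arr_in_hom)
  obtain e where em: "monic C e" and eX: "Cod C e = X" and xe: "cmp C x e = cmp C y e"
    and equalizes: "\<And>h W. h \<in> hom C W X \<Longrightarrow> cmp C x h = cmp C y h \<Longrightarrow>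
      \<exists>v \<in> hom C W (Dom C e). cmp C e v = h"
    using equalizer_exists[OF a x y] by blast
  have e: "e \<in> hom C (Dom C e) X"
    using monic_in_hom[OF em] eX by simp
  obtain m' where m': "m' \<in> hom C (Dom C m) (Dom C e)" and em': "cmp C e m' = m"
    using equalizes[OF m xm] by blast
  obtain r' where r': "r' \<in> hom C Q (Dom C e)" and er': "cmp C e r' = r"
    using equalizes[OF r xr] by blast
  obtain g where ge: "is_kernel C g e"
    using abelian_monic_is_kernel[OF a em] by blast
  have g: "g \<in> hom C X (Cod C g)"
    using ge kernel_in_hom[OF ge] eX unfolding is_kernel_def by (simp add: arr_in_hom)
  have zero_through_e: "zero_arrow C (cmp C g (cmp C e t))" if t: "t \<in> hom C W (Dom C e)" for t W
    using zero_arrow_comp[OF cat kernel_comp_zero[OF ge], of t] t comp_assoc[OF cat t e g]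
      homD[OF comp_in_hom[OF cat e g]] by simp
  obtain w where w: "w \<in> hom C Q (Cod C g)" and wc: "cmp C w c = g"
    using cokernel_factor[OF mc, of g] zero_through_e[OF m'] em' g homD[OF c] homD[OF m] by metis
  have "w = cmp C g r"
    using wc comp_assoc[OF cat r c w] cr comp_id_right[OF cat w] by simp
  then have "zero_arrow C w"
    using zero_through_e[OF r'] er' by simp
  then have "zero_arrow C g"
    using zero_arrow_comp[OF cat _, of w c X] c wc homD[OF w] by simp
  then obtain u where u: "u \<in> hom C X (Dom C e)" and eu: "cmp C e u = idm C X"
    using kernel_of_zero_arrow_split[OF cat ge] homD[OF g] by metis
  have "x = cmp C (cmp C x e) u"
    using eu comp_assoc[OF cat u e x] comp_id_right[OF cat x] by simp
  also have "\<dots> = y"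
    using xe eu comp_assoc[OF cat u e y] comp_id_right[OF cat y] by simp
  finally show ?thesis .
qed

lemma kernel_and_retraction_jointly_monic:
  "abelian C \<Longrightarrow> is_kernel C m k \<Longrightarrow> k \<in> hom C Q X \<Longrightarrow> r \<in> hom C X Q \<Longrightarrow> cmp C r k = idm C Q \<Longrightarrow>
   x \<in> hom C Y X \<Longrightarrow> y \<in> hom C Y X \<Longrightarrow> cmp C m x = cmp C m y \<Longrightarrow> cmp C r x = cmp C r y \<Longrightarrow> x = y"
  using cokernel_and_section_jointly_epic[of "op_cat C" m k X Q r x Y y] by simp

lemma split_epi_kernel_comp_monic:
  assumes a: "abelian C" and c: "c \<in> hom C N Q" and r: "r \<in> hom C Q N"
    and cr: "cmp C c r = idm C Q" and m: "is_kernel C c m" and g: "is_kernel C g r"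
  shows "monic C (cmp C g m)"
proof -
  have cat: "is_category C"
    using abelian_is_category[OF a] .
  have mN: "m \<in> hom C (Dom C m) N"
    using kernel_in_hom[OF m] homD[OF c] by simp
  have gN: "g \<in> hom C N (Cod C g)"
    using g kernel_in_hom[OF g] homD[OF r] unfolding is_kernel_def by (simp add: arr_in_hom)
  show ?thesis
    unfolding monic_def
  proof (intro conjI allI impI)
    show "cmp C g m \<in> Arr C"
      using homD[OF comp_in_hom[OF cat mN gN]] by simp
    fix V s t assume "s \<in> hom C V (Dom C (cmp C g m))" and "t \<in> hom C V (Dom C (cmp C g m))"
      and eq: "cmp C (cmp C g m) s = cmp C (cmp C g m) t"
    then have s: "s \<in> hom C V (Dom C m)" and t: "t \<in> hom C V (Dom C m)"
      using homD[OF comp_in_hom[OF cat mN gN]] by auto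
    have c_zero: "zero_arrow C (cmp C c (cmp C m u))" if u: "u \<in> hom C V (Dom C m)" for u
      using zero_arrow_comp[OF cat kernel_comp_zero[OF m], of u] u comp_assoc[OF cat u mN c]
        homD[OF comp_in_hom[OF cat mN c]] by simp
    have "cmp C m s = cmp C m t"
    proof (rule kernel_and_retraction_jointly_monic[OF a g r c cr])
      show "cmp C m s \<in> hom C V N" "cmp C m t \<in> hom C V N"
        using comp_in_hom[OF cat _ mN] s t by auto
      show "cmp C g (cmp C m s) = cmp C g (cmp C m t)"
        using eq comp_assoc[OF cat s mN gN] comp_assoc[OF cat t mN gN] by simp
      show "cmp C c (cmp C m s) = cmp C c (cmp C m t)"
        using zero_arrow_unique[OF cat c_zero[OF s] c_zero[OF t]]
          homD[OF comp_in_hom[OF cat comp_in_hom[OF cat s mN] c]]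
          homD[OF comp_in_hom[OF cat comp_in_hom[OF cat t mN] c]] by simp
    qed
    then show "s = t"
      using monicD[OF kernel_monic[OF cat m] s t] by simp
  qed
qed

lemma split_mono_cokernel_comp_epic:
  "abelian C \<Longrightarrow> s \<in> hom C Q N \<Longrightarrow> r \<in> hom C N Q \<Longrightarrow> cmp C r s = idm C Q \<Longrightarrow>
   is_cokernel C s c \<Longrightarrow> is_cokernel C g r \<Longrightarrow> epic C (cmp C c g)"
  using split_epi_kernel_comp_monic[of "op_cat C" s N Q r c g] by simp

text \<open>Without an additive structure at hand, the splitting is obtained by showing that \<open>m\<close>
  followed by the cokernel of \<open>r\<close> is both monic and epic.\<close>
lemma split_epi_kernel_is_section:
  assumes a: "abelian C" and c: "c \<in> hom C N Q" and r: "r \<in> hom C Q N"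
    and cr: "cmp C c r = idm C Q" and m: "is_kernel C c m"
  shows "is_section C m"
proof -
  have cat: "is_category C"
    using abelian_is_category[OF a] .
  have mc: "is_cokernel C m c"
    using epic_is_cokernel_of_kernel[OF a right_inverse_epic[OF cat c r cr] m] .
  obtain g where rg: "is_cokernel C r g"
    using abelian_cokernel_exists[OF a] homD[OF r] by blast
  have gr: "is_kernel C g r"
    using monic_is_kernel_of_cokernel[OF a left_inverse_monic[OF cat r c cr] rg] .
  have mN: "m \<in> hom C (Dom C m) N"
    using kernel_in_hom[OF m] homD[OF c] by simp
  have gN: "g \<in> hom C N (Cod C g)"
    using cokernel_in_hom[OF rg] homD[OF r] by simp
  have "is_section C (cmp C g m)"
    using monic_epic_is_section[OF a split_epi_kernel_comp_monic[OF a c r cr m gr]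
        split_mono_cokernel_comp_epic[OF a r c cr rg mc]] .
  then obtain v where v: "v \<in> hom C (Cod C g) (Dom C m)" and vgm: "cmp C v (cmp C g m) = idm C (Dom C m)"
    using homD[OF comp_in_hom[OF cat mN gN]] by (auto elim: is_sectionE)
  show ?thesis
  proof (rule is_sectionI[OF mN comp_in_hom[OF cat gN v]])
    show "cmp C (cmp C v g) m = idm C (Dom C m)"
      using vgm comp_assoc[OF cat mN gN v] by simp
  qed
qed

lemma split_mono_cokernel_is_retraction:
  "abelian C \<Longrightarrow> s \<in> hom C Q N \<Longrightarrow> r \<in> hom C N Q \<Longrightarrow> cmp C r s = idm C Q \<Longrightarrow>
   is_cokernel C s c \<Longrightarrow> is_retraction C c"
  using split_epi_kernel_is_section[of "op_cat C" s N Q r c] by simp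

section \<open>Strongly Rickart objects\<close>

lemma strongly_rickart_retract:
  assumes cat: "is_category C" and s: "s \<in> hom C N' N" and r: "r \<in> hom C N N'"
    and rs: "cmp C r s = idm C N'" and sr: "strongly_rickart C M N"
  shows "strongly_rickart C M N'"
  unfolding strongly_rickart_def
proof (intro ballI allI impI)
  fix f k assume f: "f \<in> hom C M N'" and "is_kernel C f k"
  then have "is_kernel C (cmp C s f) k"
    using kernel_comp_section[OF cat f s r rs] by blast
  then show "is_section C k \<and> fully_invariant C k"
    using sr comp_in_hom[OF cat f s] unfolding strongly_rickart_def by blast
qed

lemma strongly_rickart_product_factor:
  assumes a: "abelian C" and P: "is_product C I N P p" and N: "\<forall>j \<in> I. N j \<in> Obj C"
    and i: "i \<in> I" and sr: "strongly_rickart C M P"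
  shows "strongly_rickart C M (N i)"
  using strongly_rickart_retract[OF abelian_is_category[OF a] _ product_proj_in_hom[OF P i] _ sr]
    product_proj_split[OF a P N i] by metis

lemma dual_strongly_rickart_coproduct_summand:
  "abelian C \<Longrightarrow> is_coproduct C I M S e \<Longrightarrow> \<forall>j \<in> I. M j \<in> Obj C \<Longrightarrow> i \<in> I \<Longrightarrow>
   dual_strongly_rickart C S N \<Longrightarrow> dual_strongly_rickart C (M i) N"
  using strongly_rickart_product_factor[of "op_cat C" I M S e i N] by simp

lemma kernel_into_product_as_intersection:
  assumes a: "abelian C" and P: "is_product C I N P p" and f: "f \<in> hom C M P"
    and k: "is_kernel C f k" and K: "\<And>i. i \<in> I \<Longrightarrow> is_kernel C (cmp C (p i) f) (K i)"
    and d: "is_intersection C M (K ` I) d"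
  obtains v w where "v \<in> hom C (Dom C k) (Dom C d)" and "cmp C d v = k"
    and "w \<in> hom C (Dom C d) (Dom C k)" and "cmp C k w = d"
proof -
  have cat: "is_category C"
    using abelian_is_category[OF a] .
  have pf: "\<And>i. i \<in> I \<Longrightarrow> cmp C (p i) f \<in> hom C M (N i)"
    using comp_in_hom[OF cat f product_proj_in_hom[OF P]] by simp
  have KM: "K i \<in> hom C (Dom C (K i)) M" if i: "i \<in> I" for i
    using kernel_in_hom[OF K[OF i]] homD[OF pf[OF i]] by simp
  have kM: "k \<in> hom C (Dom C k) M"
    using kernel_in_hom[OF k] homD[OF f] by simp
  have dM: "d \<in> hom C (Dom C d) M"
    using d monic_in_hom unfolding is_intersection_def by metis
  have "\<forall>i \<in> I. \<exists>t \<in> hom C (Dom C k) (Dom C (K i)). cmp C (K i) t = k"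
  proof
    fix i assume i: "i \<in> I"
    obtain t where "t \<in> hom C (Dom C k) (Dom C (K i))" and "cmp C (K i) t = k"
      by (rule kernel_factors_through_kernel_of_comp[OF cat f product_proj_in_hom[OF P i] k K[OF i]])
    then show "\<exists>t \<in> hom C (Dom C k) (Dom C (K i)). cmp C (K i) t = k" ..
  qed
  then obtain v where v: "v \<in> hom C (Dom C k) (Dom C d)" and dv: "cmp C d v = k"
    using d homD[OF kM] unfolding is_intersection_def by blast
  have "zero_arrow C (cmp C (p i) (cmp C f d))" if i: "i \<in> I" for i
  proof -
    obtain t where t: "t \<in> hom C (Dom C d) (Dom C (K i))" and Kt: "cmp C (K i) t = d"
      using d i unfolding is_intersection_def by blast
    have "cmp C (p i) (cmp C f d) = cmp C (cmp C (cmp C (p i) f) (K i)) t"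
      using Kt comp_assoc[OF cat dM f product_proj_in_hom[OF P i]]
        comp_assoc[OF cat t KM[OF i] pf[OF i]] by simp
    then show ?thesis
      using zero_arrow_comp[OF cat kernel_comp_zero[OF K[OF i]], of t] t
        homD[OF comp_in_hom[OF cat KM[OF i] pf[OF i]]] by simp
  qed
  then have "zero_arrow C (cmp C f d)"
    using product_zero_arrowI[OF a P comp_in_hom[OF cat dM f]] by blast
  then obtain w where "w \<in> hom C (Dom C d) (Dom C k)" and "cmp C k w = d"
    using kernel_factor[OF k, of d] dM homD[OF f] by auto
  with v dv show thesis
    by (rule that)
qed

lemma strongly_rickart_product:
  assumes a: "abelian C" and wd: "weak_duo C M" and ssip: "SSIP C M" and P: "is_product C I N P p"
    and sr: "\<forall>i \<in> I. strongly_rickart C M (N i)"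
  shows "strongly_rickart C M P"
  unfolding strongly_rickart_def
proof (intro ballI allI impI)
  have cat: "is_category C"
    using abelian_is_category[OF a] .
  fix f k assume f: "f \<in> hom C M P" and k: "is_kernel C f k"
  have pf: "\<And>i. i \<in> I \<Longrightarrow> cmp C (p i) f \<in> hom C M (N i)"
    using comp_in_hom[OF cat f product_proj_in_hom[OF P]] by simp
  have "\<exists>K. is_kernel C (cmp C (p i) f) K" if i: "i \<in> I" for i
    using abelian_kernel_exists[OF a] homD[OF pf[OF i]] by blast
  then obtain K where K: "\<And>i. i \<in> I \<Longrightarrow> is_kernel C (cmp C (p i) f) (K i)"
    by metis
  have KM: "K i \<in> hom C (Dom C (K i)) M" if i: "i \<in> I" for i
    using kernel_in_hom[OF K[OF i]] homD[OF pf[OF i]] by simp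
  have "is_section C (K i)" if i: "i \<in> I" for i
    using sr i pf[OF i] K[OF i] unfolding strongly_rickart_def by blast
  then have "\<forall>s \<in> K ` I. is_section C s \<and> Cod C s = M"
    using homD[OF KM] by blast
  then obtain d where d: "is_intersection C M (K ` I) d" and ds: "is_section C d"
    using ssip unfolding SSIP_def by blast
  have kM: "k \<in> hom C (Dom C k) M"
    using kernel_in_hom[OF k] homD[OF f] by simp
  have dM: "d \<in> hom C (Dom C d) M"
    using d monic_in_hom unfolding is_intersection_def by metis
  obtain v w where "v \<in> hom C (Dom C k) (Dom C d)" "cmp C d v = k"
    and "w \<in> hom C (Dom C d) (Dom C k)" "cmp C k w = d"
    by (rule kernel_into_product_as_intersection[OF a P f k K d])
  then have "is_section C k"
    using section_if_same_subobject[OF cat kernel_monic[OF cat k] kM dM ds] by blast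
  moreover have "fully_invariant C k"
    using wd calculation homD[OF kM] unfolding weak_duo_def by blast
  ultimately show "is_section C k \<and> fully_invariant C k" ..
qed

lemma cokernel_of_fully_invariant_is_fully_coinvariant:
  assumes cat: "is_category C" and uc: "is_cokernel C u c" and fi: "fully_invariant C u"
  shows "fully_coinvariant C c"
  unfolding fully_coinvariant_def
proof (intro conjI ballI)
  show "epic C c"
    using cokernel_epic[OF cat uc] .
  fix h assume "h \<in> hom C (Dom C c) (Dom C c)"
  moreover have c: "c \<in> hom C (Cod C u) (Cod C c)"
    using cokernel_in_hom[OF uc] .
  ultimately have h: "h \<in> hom C (Cod C u) (Cod C u)"
    using homD[OF c] by simp
  have u: "u \<in> hom C (Dom C u) (Cod C u)"
    using uc unfolding is_cokernel_def by (simp add: arr_in_hom)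
  obtain \<alpha> where \<alpha>: "\<alpha> \<in> hom C (Dom C u) (Dom C u)" and hu: "cmp C h u = cmp C u \<alpha>"
    using fi h unfolding fully_invariant_def by blast
  have "cmp C (cmp C c h) u = cmp C (cmp C c u) \<alpha>"
    using comp_assoc[OF cat u h c] hu comp_assoc[OF cat \<alpha> u c] by simp
  then have "zero_arrow C (cmp C (cmp C c h) u)"
    using zero_arrow_comp[OF cat cokernel_comp_zero[OF uc], of \<alpha>] \<alpha>
      homD[OF comp_in_hom[OF cat u c]] by simp
  then obtain \<gamma> where "\<gamma> \<in> hom C (Cod C c) (Cod C c)" and "cmp C \<gamma> c = cmp C c h"
    using cokernel_factor[OF uc comp_in_hom[OF cat h c]] by blast
  then show "\<exists>\<gamma> \<in> hom C (Cod C c) (Cod C c). cmp C c h = cmp C \<gamma> c"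
    by (metis (no_types))
qed

lemma comp_sum_zero_arrow:
  assumes a: "abelian C" and u: "is_sum C N F u" and F: "\<And>s. s \<in> F \<Longrightarrow> s \<in> hom C (Dom C s) N"
    and c: "c \<in> hom C N Q" and zero: "\<And>s. s \<in> F \<Longrightarrow> zero_arrow C (cmp C c s)"
  shows "zero_arrow C (cmp C c u)"
proof -
  have cat: "is_category C"
    using abelian_is_category[OF a] .
  obtain m where m: "is_kernel C c m"
    using abelian_kernel_exists[OF a] homD[OF c] by blast
  have mN: "m \<in> hom C (Dom C m) N"
    using kernel_in_hom[OF m] homD[OF c] by simp
  have "\<forall>s \<in> F. \<exists>t \<in> hom C (Dom C s) (Dom C m). cmp C m t = s"
  proof
    fix s assume s: "s \<in> F"
    have "s \<in> hom C (Dom C s) (Dom C c)"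
      using F[OF s] homD[OF c] by simp
    then obtain t where "t \<in> hom C (Dom C s) (Dom C m)" and "cmp C m t = s"
      using kernel_factor[OF m _ zero[OF s]] by blast
    then show "\<exists>t \<in> hom C (Dom C s) (Dom C m). cmp C m t = s" ..
  qed
  then obtain v where v: "v \<in> hom C (Dom C u) (Dom C m)" and mv: "cmp C m v = u"
    using u kernel_monic[OF cat m] homD[OF mN] unfolding is_sum_def by blast
  have "cmp C c u = cmp C (cmp C c m) v"
    using mv comp_assoc[OF cat v mN c] by simp
  then show ?thesis
    using zero_arrow_comp[OF cat kernel_comp_zero[OF m], of v] v homD[OF comp_in_hom[OF cat mN c]]
    by simp
qed

lemma cokernel_of_factor:
  assumes cat: "is_category C" and fc: "is_cokernel C f c" and u: "u \<in> hom C U N"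
    and \<phi>: "\<phi> \<in> hom C S U" and u\<phi>: "cmp C u \<phi> = f" and cu: "zero_arrow C (cmp C c u)"
  shows "is_cokernel C u c"
  unfolding is_cokernel_def
proof (intro conjI allI impI)
  have f: "f \<in> hom C S N"
    using comp_in_hom[OF cat \<phi> u] u\<phi> by simp
  show "u \<in> Arr C" "c \<in> Arr C" "Dom C c = Cod C u" "zero_arrow C (cmp C c u)"
    using homD[OF u] homD[OF f] homD[OF cokernel_in_hom[OF fc]] cu by auto
  fix g assume "g \<in> Arr C \<and> Dom C g = Cod C u \<and> zero_arrow C (cmp C g u)"
  then have g: "g \<in> hom C N (Cod C g)" and gu: "zero_arrow C (cmp C g u)"
    using homD[OF u] by (auto simp: hom_def)
  have "zero_arrow C (cmp C g f)"
    using zero_arrow_comp[OF cat gu, of \<phi>] \<phi> u\<phi> comp_assoc[OF cat \<phi> u g]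
      homD[OF comp_in_hom[OF cat u g]] by simp
  then show "\<exists>!v. v \<in> hom C (Cod C c) (Cod C g) \<and> cmp C v c = g"
    using cokernel_factor_unique[OF fc, of g] g homD[OF f] by simp
qed

lemma cokernel_kills_image_of_restriction:
  assumes cat: "is_category C" and f: "f \<in> hom C S N" and h: "h \<in> hom C L S"
    and fc: "is_cokernel C f c" and Q: "is_cokernel C (cmp C f h) Q" and K: "is_kernel C Q K"
  shows "zero_arrow C (cmp C c K)"
proof -
  have QN: "Q \<in> hom C N (Cod C Q)"
    using cokernel_in_hom[OF Q] homD[OF comp_in_hom[OF cat h f]] by simp
  have KN: "K \<in> hom C (Dom C K) N"
    using kernel_in_hom[OF K] homD[OF QN] by simp
  obtain w where w: "w \<in> hom C (Cod C Q) (Cod C c)" and wQ: "cmp C w Q = c"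
    by (rule cokernel_factors_through_cokernel_of_comp[OF cat f h fc Q])
  have "cmp C c K = cmp C w (cmp C Q K)"
    using wQ comp_assoc[OF cat KN QN w] by simp
  then show ?thesis
    using comp_zero_arrow[OF cat kernel_comp_zero[OF K], of w] w
      homD[OF comp_in_hom[OF cat KN QN]] by simp
qed

lemma coproduct_arrow_factors_through_sum_of_images:
  assumes cat: "is_category C" and S: "is_coproduct C I M S e" and f: "f \<in> hom C S N"
    and Q: "\<And>i. i \<in> I \<Longrightarrow> is_cokernel C (cmp C f (e i)) (Q i)"
    and K: "\<And>i. i \<in> I \<Longrightarrow> is_kernel C (Q i) (K i)" and u: "is_sum C N (K ` I) u"
  obtains \<phi> where "\<phi> \<in> hom C S (Dom C u)" and "cmp C u \<phi> = f"
proof -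
  have uN: "u \<in> hom C (Dom C u) N"
    using u monic_in_hom unfolding is_sum_def by metis
  have fe: "\<And>i. i \<in> I \<Longrightarrow> cmp C f (e i) \<in> hom C (M i) N"
    using comp_in_hom[OF cat coproduct_inj_in_hom[OF S] f] by simp
  have "\<exists>q. q \<in> hom C (M i) (Dom C u) \<and> cmp C u q = cmp C f (e i)" if i: "i \<in> I" for i
  proof -
    have "cmp C f (e i) \<in> hom C (M i) (Dom C (Q i))"
      using fe[OF i] homD[OF cokernel_in_hom[OF Q[OF i]]] homD[OF fe[OF i]] by simp
    then obtain s where s: "s \<in> hom C (M i) (Dom C (K i))" and Ks: "cmp C (K i) s = cmp C f (e i)"
      using kernel_factor[OF K[OF i] _ cokernel_comp_zero[OF Q[OF i]]] by blast
    obtain t where t: "t \<in> hom C (Dom C (K i)) (Dom C u)" and ut: "cmp C u t = K i"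
      using u i unfolding is_sum_def by blast
    show ?thesis
      using comp_in_hom[OF cat s t] comp_assoc[OF cat s t uN] ut Ks by auto
  qed
  then obtain q where q: "\<forall>i \<in> I. q i \<in> hom C (M i) (Dom C u)"
    and uq: "\<And>i. i \<in> I \<Longrightarrow> cmp C u (q i) = cmp C f (e i)"
    by metis
  obtain \<phi> where \<phi>: "\<phi> \<in> hom C S (Dom C u)" and \<phi>e: "\<forall>i \<in> I. cmp C \<phi> (e i) = q i"
    using coproduct_cotuple_exists[OF S _ q] hom_objs[OF cat uN] by blast
  have "cmp C u \<phi> = f"
  proof (rule coproduct_arrow_eqI[OF cat S comp_in_hom[OF cat \<phi> uN] f], intro ballI)
    fix i assume i: "i \<in> I"
    show "cmp C (cmp C u \<phi>) (e i) = cmp C f (e i)"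
      using comp_assoc[OF cat coproduct_inj_in_hom[OF S i] \<phi> uN] \<phi>e uq i by simp
  qed
  with \<phi> show thesis
    by (rule that)
qed

lemma dual_strongly_rickart_image_is_section:
  assumes a: "abelian C" and dsr: "dual_strongly_rickart C M N" and g: "g \<in> hom C M N"
    and Q: "is_cokernel C g Q" and K: "is_kernel C Q K"
  shows "is_section C K"
proof -
  have QN: "Q \<in> hom C N (Cod C Q)"
    using cokernel_in_hom[OF Q] homD[OF g] by simp
  have "is_retraction C Q"
    using dsr g Q unfolding dual_strongly_rickart_def by blast
  then obtain r where "r \<in> hom C (Cod C Q) N" and "cmp C Q r = idm C (Cod C Q)"
    using homD[OF QN] unfolding is_retraction_def by auto
  then show ?thesis
    using split_epi_kernel_is_section[OF a QN _ _ K] by blast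
qed

lemma dual_strongly_rickart_coproduct:
  assumes a: "abelian C" and wd: "weak_duo C N" and sssp: "SSSP C N" and S: "is_coproduct C I M S e"
    and dsr: "\<forall>i \<in> I. dual_strongly_rickart C (M i) N"
  shows "dual_strongly_rickart C S N"
  unfolding dual_strongly_rickart_def
proof (intro ballI allI impI)
  have cat: "is_category C"
    using abelian_is_category[OF a] .
  fix f c assume f: "f \<in> hom C S N" and fc: "is_cokernel C f c"
  have fe: "\<And>i. i \<in> I \<Longrightarrow> cmp C f (e i) \<in> hom C (M i) N"
    using comp_in_hom[OF cat coproduct_inj_in_hom[OF S] f] by simp
  have "\<exists>Q. is_cokernel C (cmp C f (e i)) Q" if i: "i \<in> I" for i
    using abelian_cokernel_exists[OF a] homD[OF fe[OF i]] by blast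
  then obtain Q where Q: "\<And>i. i \<in> I \<Longrightarrow> is_cokernel C (cmp C f (e i)) (Q i)"
    by metis
  have QN: "Q i \<in> hom C N (Cod C (Q i))" if i: "i \<in> I" for i
    using cokernel_in_hom[OF Q[OF i]] homD[OF fe[OF i]] by simp
  have "\<exists>K. is_kernel C (Q i) K" if i: "i \<in> I" for i
    using abelian_kernel_exists[OF a] homD[OF QN[OF i]] by blast
  then obtain K where K: "\<And>i. i \<in> I \<Longrightarrow> is_kernel C (Q i) (K i)"
    by metis
  have KN: "K i \<in> hom C (Dom C (K i)) N" if i: "i \<in> I" for i
    using kernel_in_hom[OF K[OF i]] homD[OF QN[OF i]] by simp
  have "is_section C (K i)" if i: "i \<in> I" for i
    using dual_strongly_rickart_image_is_section[OF a _ fe[OF i] Q[OF i] K[OF i]] dsr i by blast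
  then have "\<forall>s \<in> K ` I. is_section C s \<and> Cod C s = N"
    using homD[OF KN] by blast
  then obtain u where u: "is_sum C N (K ` I) u" and us: "is_section C u"
    using sssp unfolding SSSP_def by blast
  have uN: "u \<in> hom C (Dom C u) N"
    using u monic_in_hom unfolding is_sum_def by metis
  have "zero_arrow C (cmp C c u)"
  proof (rule comp_sum_zero_arrow[OF a u])
    show "c \<in> hom C N (Cod C c)"
      using cokernel_in_hom[OF fc] homD[OF f] by simp
    show "s \<in> hom C (Dom C s) N" and "zero_arrow C (cmp C c s)" if "s \<in> K ` I" for s
      using that KN cokernel_kills_image_of_restriction[OF cat f coproduct_inj_in_hom[OF S] fc Q K]
      by auto
  qed
  moreover obtain \<phi> where "\<phi> \<in> hom C S (Dom C u)" and "cmp C u \<phi> = f"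
    by (rule coproduct_arrow_factors_through_sum_of_images[OF cat S f Q K u])
  ultimately have uc: "is_cokernel C u c"
    using cokernel_of_factor[OF cat fc uN] by blast
  obtain u' where "u' \<in> hom C N (Dom C u)" and "cmp C u' u = idm C (Dom C u)"
    using us homD[OF uN] by (auto elim: is_sectionE)
  then have "is_retraction C c"
    using split_mono_cokernel_is_retraction[OF a uN _ _ uc] by blast
  moreover have "fully_coinvariant C c"
    using cokernel_of_fully_invariant_is_fully_coinvariant[OF cat uc] wd us homD[OF uN]
    unfolding weak_duo_def by blast
  ultimately show "is_retraction C c \<and> fully_coinvariant C c" ..
qed

theorem theorem3p5:
  fixes C :: "('o, 'm) category"
  assumes "abelian C"
  shows
    "(\<forall>(M::'o) (I::'i set) (N::'i \<Rightarrow> 'o) P p.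
        weak_duo C M \<and> SSIP C M \<and> (\<forall>i \<in> I. N i \<in> Obj C) \<and> is_product C I N P p \<longrightarrow>
        (strongly_rickart C M P \<longleftrightarrow> (\<forall>i \<in> I. strongly_rickart C M (N i))))
     \<and>
     (\<forall>(I::'j set) (M::'j \<Rightarrow> 'o) S e (N::'o).
        (\<forall>i \<in> I. M i \<in> Obj C) \<and> is_coproduct C I M S e \<and> weak_duo C N \<and> SSSP C N \<longrightarrow>
        (dual_strongly_rickart C S N \<longleftrightarrow> (\<forall>i \<in> I. dual_strongly_rickart C (M i) N)))"
proof (intro conjI allI impI)
  fix M :: 'o and I :: "'i set" and N :: "'i \<Rightarrow> 'o" and P p
  assume "weak_duo C M \<and> SSIP C M \<and> (\<forall>i \<in> I. N i \<in> Obj C) \<and> is_product C I N P p"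
  then have wd: "weak_duo C M" and ssip: "SSIP C M" and N: "\<forall>i \<in> I. N i \<in> Obj C"
    and P: "is_product C I N P p"
    by auto
  show "strongly_rickart C M P \<longleftrightarrow> (\<forall>i \<in> I. strongly_rickart C M (N i))"
    using strongly_rickart_product[OF assms wd ssip P] strongly_rickart_product_factor[OF assms P N]
    by blast
next
  fix I :: "'j set" and M :: "'j \<Rightarrow> 'o" and S e and N :: 'o
  assume "(\<forall>i \<in> I. M i \<in> Obj C) \<and> is_coproduct C I M S e \<and> weak_duo C N \<and> SSSP C N"
  then have M: "\<forall>i \<in> I. M i \<in> Obj C" and S: "is_coproduct C I M S e" and wd: "weak_duo C N"
    and sssp: "SSSP C N"
    by auto
  show "dual_strongly_rickart C S N \<longleftrightarrow> (\<forall>i \<in> I. dual_strongly_rickart C (M i) N)"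
    using dual_strongly_rickart_coproduct[OF assms wd sssp S]
      dual_strongly_rickart_coproduct_summand[OF assms S M] by blast
qed

end
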